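(* There exists $(\alpha_n(0))_{n\geq0}\in\mathbb{D}^\infty$ such that, for the solution $\alpha_n(t)$ of the Schur flow $\alpha_n'(t)=(1-|\alpha_n(t)|^2)(\alpha_{n+1}(t)-\alpha_{n-1}(t))$, $n\geq0$, $\alpha_{-1}\equiv-1$, with these initial conditions, $\alpha_0(t)$ does not have a limit as $t\to\infty$.
   Context: $\mathbb{D}=\{z\in\mathbb{C}:|z|<1\}$. For initial data in $\mathbb{D}^\infty$ the Schur flow has a unique global solution with values in $\mathbb{D}$; it is given by $\alpha_n(t)=\alpha_n(\mu_t)$, where $\mu$ is the probability measure on the unit circle with Verblunsky coefficients $\alpha_n(\mu)=\alpha_n(0)$ and $d\mu_t(\theta)=e^{2t\cos\theta}d\mu(\theta)/\int e^{2t\cos\theta}d\mu(\theta)$. *)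

theory Defs
  imports "HOL-Analysis.Analysis"
begin

definition schur_prev :: "(nat \<Rightarrow> real \<Rightarrow> complex) \<Rightarrow> nat \<Rightarrow> real \<Rightarrow> complex" where
  "schur_prev \<alpha> n t = (if n = 0 then -1 else \<alpha> (n - 1) t)"

definition schur_flow_solution :: "(nat \<Rightarrow> complex) \<Rightarrow> (nat \<Rightarrow> real \<Rightarrow> complex) \<Rightarrow> bool" where
  "schur_flow_solution a0 \<alpha> \<longleftrightarrow>
     (\<forall>n. \<alpha> n 0 = a0 n) \<and>
     (\<forall>n t. norm (\<alpha> n t) < 1) \<and>
     (\<forall>n t. ((\<alpha> n) has_vector_derivative
               (complex_of_real (1 - (norm (\<alpha> n t))\<^sup>2) * (\<alpha> (Suc n) t - schur_prev \<alpha> n t))) (at t))"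

end

(*
  The measure \<mu> = \<Sum>\<^sub>j w\<^sub>j \<delta>(\<zeta>\<^sub>j) has atoms \<zeta>\<^sub>j on the unit circle with
  2 Re \<zeta>\<^sub>j = 1 - 2\<^sup>-\<^sup>j increasing to 1, Im \<zeta>\<^sub>j of sign (-1)\<^sup>j, and weights
  w\<^sub>j = exp (-4\<^sup>j\<^sup>+\<^sup>2). The moments m\<^sub>a\<^sub>b(t) = \<integral> z\<^sup>a conj(z)\<^sup>b e\<^sup>2\<^sup>t\<^sup>c\<^sup>o\<^sup>s\<^sup>\<theta> d\<mu> satisfy
  m\<^sub>a\<^sub>b' = m\<^sub>a\<^sub>+\<^sub>1\<^sub>b + m\<^sub>a\<^sub>b\<^sub>+\<^sub>1. Differentiating the orthogonality relations of the
  monic orthogonal polynomials, which the Szeg\<H>o recursion builds from the moments alone, shows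
  that the Verblunsky coefficients of \<mu>\<^sub>t solve the Schur flow; since the flow is Lipschitz
  in the sup norm, this is the only solution. At the time T\<^sub>k = 2\<^sup>k (4\<^sup>k\<^sup>+\<^sup>2 + k + 4) the
  k-th atom carries almost all of the mass of \<mu>\<^sub>t, so that \<alpha>\<^sub>0(T\<^sub>k), the normalised
  first moment of \<mu>\<^sub>T\<^sub>k, has imaginary part at least 1/2 in absolute value with sign (-1)\<^sup>k.
*)

theory Submission
  imports Defs
begin

section \<open>Uniqueness of solutions of the Schur flow\<close>

lemma norm_diff_le_of_vector_derivative_bound:
  fixes f :: "real \<Rightarrow> 'a::real_normed_vector"
  assumes "a \<le> b"
    and deriv: "\<And>x. x \<in> {a..b} \<Longrightarrow> (f has_vector_derivative f' x) (at x)"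
    and bound: "\<And>x. x \<in> {a..b} \<Longrightarrow> norm (f' x) \<le> B"
  shows "norm (f b - f a) \<le> B * (b - a)"
proof -
  have "norm (f b - f a) \<le> B * norm (b - a)"
  proof (rule differentiable_bound[of "{a..b}" f "\<lambda>x h. h *\<^sub>R f' x"])
    show "(f has_derivative (\<lambda>h. h *\<^sub>R f' x)) (at x within {a..b})" if "x \<in> {a..b}" for x
      using deriv[OF that] by (auto simp: has_vector_derivative_def intro: has_derivative_at_withinI)
    show "onorm (\<lambda>h. h *\<^sub>R f' x) \<le> B" if "x \<in> {a..b}" for x
      using bound[OF that] by (intro onorm_le) (metis abs_ge_zero mult.commute mult_left_mono norm_scaleR
          real_norm_def)
  qed (use \<open>a \<le> b\<close> in auto)
  then show ?thesis using \<open>a \<le> b\<close> by simp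
qed

lemma schur_field_diff_bound:
  fixes x y x' y' p q :: complex
  assumes "norm x < 1" "norm y < 1" "norm y' \<le> 1" "norm q \<le> 1"
  shows "norm (of_real (1 - (norm x)\<^sup>2) * (x' - p) - of_real (1 - (norm y)\<^sup>2) * (y' - q))
         \<le> norm (x' - y') + norm (p - q) + 4 * norm (x - y)"
proof -
  have split: "of_real (1 - (norm x)\<^sup>2) * (x' - p) - of_real (1 - (norm y)\<^sup>2) * (y' - q) =
     of_real (1 - (norm x)\<^sup>2) * ((x' - y') - (p - q)) + of_real ((norm y)\<^sup>2 - (norm x)\<^sup>2) * (y' - q)"
    by (simp add: algebra_simps)
  have "\<bar>1 - (norm x)\<^sup>2\<bar> \<le> 1"
    using assms(1) by (simp add: power_le_one)
  then have "norm (of_real (1 - (norm x)\<^sup>2) * ((x' - y') - (p - q))) \<le> norm ((x' - y') - (p - q))"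
    unfolding norm_mult norm_of_real using mult_right_mono[OF _ norm_ge_zero] by fastforce
  then have first: "norm (of_real (1 - (norm x)\<^sup>2) * ((x' - y') - (p - q))) \<le> norm (x' - y') + norm (p - q)"
    using norm_triangle_ineq4[of "x' - y'" "p - q"] by linarith
  have "(norm y)\<^sup>2 - (norm x)\<^sup>2 = (norm y - norm x) * (norm y + norm x)"
    by (simp add: power2_eq_square algebra_simps)
  then have "\<bar>(norm y)\<^sup>2 - (norm x)\<^sup>2\<bar> = \<bar>norm y - norm x\<bar> * (norm y + norm x)"
    by (simp add: abs_mult)
  also have "\<dots> \<le> norm (x - y) * 2"
    using assms(1,2) norm_triangle_ineq3[of y x] by (intro mult_mono) (auto simp: norm_minus_commute)
  finally have "\<bar>(norm y)\<^sup>2 - (norm x)\<^sup>2\<bar> \<le> 2 * norm (x - y)" by simp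
  moreover have "norm (y' - q) \<le> 2"
    using assms(3,4) norm_triangle_ineq4[of y' q] by simp
  ultimately have "\<bar>(norm y)\<^sup>2 - (norm x)\<^sup>2\<bar> * norm (y' - q) \<le> (2 * norm (x - y)) * 2"
    by (intro mult_mono) auto
  then have second: "norm (of_real ((norm y)\<^sup>2 - (norm x)\<^sup>2) * (y' - q)) \<le> 4 * norm (x - y)"
    unfolding norm_mult norm_of_real by linarith
  show ?thesis
    unfolding split using first second norm_triangle_ineq[of "of_real (1 - (norm x)\<^sup>2) * ((x' - y') - (p - q))"
      "of_real ((norm y)\<^sup>2 - (norm x)\<^sup>2) * (y' - q)"] by linarith
qed

lemma schur_flow_solutionD:
  assumes "schur_flow_solution a0 \<alpha>"
  shows "\<alpha> n 0 = a0 n" and "norm (\<alpha> n t) < 1"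
    and "(\<alpha> n has_vector_derivative
           of_real (1 - (norm (\<alpha> n t))\<^sup>2) * (\<alpha> (Suc n) t - schur_prev \<alpha> n t)) (at t)"
  using assms unfolding schur_flow_solution_def by auto

lemma norm_schur_prev_le: "(\<And>n. norm (\<alpha> n t) < 1) \<Longrightarrow> norm (schur_prev \<alpha> n t) \<le> 1"
  by (simp add: schur_prev_def less_imp_le)

lemma schur_flow_difference_growth:
  assumes \<alpha>: "schur_flow_solution a0 \<alpha>" and \<beta>: "schur_flow_solution b0 \<beta>"
    and agree: "\<And>n. \<alpha> n s0 = \<beta> n s0" and "s0 \<le> s"
    and bound: "\<And>n u. u \<in> {s0..s} \<Longrightarrow> norm (\<alpha> n u - \<beta> n u) \<le> D"
  shows "norm (\<alpha> n s - \<beta> n s) \<le> 6 * D * (s - s0)"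
proof -
  note \<alpha>D = schur_flow_solutionD[OF \<alpha>] and \<beta>D = schur_flow_solutionD[OF \<beta>]
  let ?v = "\<lambda>\<gamma> u. of_real (1 - (norm (\<gamma> n u))\<^sup>2) * (\<gamma> (Suc n) u - schur_prev \<gamma> n u)"
  have prev_bound: "norm (schur_prev \<alpha> n u - schur_prev \<beta> n u) \<le> D" if "u \<in> {s0..s}" for n u
    using bound[OF that] bound[of s0 0] \<open>s0 \<le> s\<close>
    by (cases n) (auto simp: schur_prev_def intro: order_trans[OF norm_ge_zero])
  have "norm ((\<lambda>u. \<alpha> n u - \<beta> n u) s - (\<lambda>u. \<alpha> n u - \<beta> n u) s0) \<le> 6 * D * (s - s0)"
  proof (rule norm_diff_le_of_vector_derivative_bound[OF \<open>s0 \<le> s\<close>])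
    fix u assume u: "u \<in> {s0..s}"
    show "((\<lambda>u. \<alpha> n u - \<beta> n u) has_vector_derivative ?v \<alpha> u - ?v \<beta> u) (at u)"
      by (intro derivative_intros \<alpha>D(3) \<beta>D(3))
    have "norm (?v \<alpha> u - ?v \<beta> u)
      \<le> norm (\<alpha> (Suc n) u - \<beta> (Suc n) u) + norm (schur_prev \<alpha> n u - schur_prev \<beta> n u)
        + 4 * norm (\<alpha> n u - \<beta> n u)"
      by (intro schur_field_diff_bound \<alpha>D(2) \<beta>D(2) norm_schur_prev_le less_imp_le)
    also have "\<dots> \<le> 6 * D"
      using bound[OF u, of "Suc n"] bound[OF u, of n] prev_bound[OF u, of n] by linarith
    finally show "norm (?v \<alpha> u - ?v \<beta> u) \<le> 6 * D" .
  qed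
  then show ?thesis using agree[of n] by simp
qed

text \<open>On a time step of length \<open>1/12\<close> the supremum \<open>D\<close> of all differences satisfies
  \<open>D \<le> 6 D / 12\<close>, hence vanishes.\<close>

lemma schur_flow_agree_step:
  assumes \<alpha>: "schur_flow_solution a0 \<alpha>" and \<beta>: "schur_flow_solution b0 \<beta>"
    and agree: "\<And>n. \<alpha> n s0 = \<beta> n s0" and s: "s \<in> {s0..s0 + 1/12}"
  shows "\<alpha> n s = \<beta> n s"
proof -
  define E where "E = {norm (\<alpha> n u - \<beta> n u) | n u. u \<in> {s0..s0 + 1/12}}"
  have "x \<le> 2" if x: "x \<in> E" for x
  proof -
    obtain n u where "x = norm (\<alpha> n u - \<beta> n u)" using x unfolding E_def by blast
    then show ?thesis
      using norm_triangle_ineq4[of "\<alpha> n u" "\<beta> n u"] schur_flow_solutionD(2)[OF \<alpha>, of n u]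
        schur_flow_solutionD(2)[OF \<beta>, of n u] by linarith
  qed
  then have bdd: "bdd_above E" by (auto simp: bdd_above_def)
  define D where "D = Sup E"
  have le_D: "norm (\<alpha> n u - \<beta> n u) \<le> D" if "u \<in> {s0..s0 + 1/12}" for n u
    unfolding D_def by (rule cSup_upper[OF _ bdd]) (use that in \<open>auto simp: E_def\<close>)
  have "0 \<le> D" using order_trans[OF norm_ge_zero le_D[of s0 0]] by simp
  have "x \<le> D / 2" if "x \<in> E" for x
  proof -
    obtain n u where x: "x = norm (\<alpha> n u - \<beta> n u)" and u: "u \<in> {s0..s0 + 1/12}"
      using \<open>x \<in> E\<close> by (auto simp: E_def)
    have "x \<le> 6 * D * (u - s0)"
      unfolding x using u by (intro schur_flow_difference_growth[OF \<alpha> \<beta> agree] le_D) auto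
    also have "\<dots> \<le> 6 * D * (1/12)"
      using u \<open>0 \<le> D\<close> by (intro mult_left_mono) auto
    finally show ?thesis by simp
  qed
  then have "D \<le> D / 2"
    unfolding D_def by (intro cSup_least) (auto simp: E_def)
  then have "norm (\<alpha> n s - \<beta> n s) \<le> 0"
    using le_D[OF s, of n] by linarith
  then show ?thesis by simp
qed

lemma schur_flow_solution_unique:
  assumes \<alpha>: "schur_flow_solution a0 \<alpha>" and \<beta>: "schur_flow_solution a0 \<beta>" and "0 \<le> t"
  shows "\<alpha> n t = \<beta> n t"
proof -
  have agree: "\<forall>n. \<forall>s\<in>{0..real K / 12}. \<alpha> n s = \<beta> n s" for K
  proof (induction K)
    case 0
    then show ?case using \<alpha> \<beta> by (auto simp: schur_flow_solution_def)
  next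
    case (Suc K)
    then have "\<And>n. \<alpha> n (real K / 12) = \<beta> n (real K / 12)" by auto
    then show ?case
      using Suc schur_flow_agree_step[OF \<alpha> \<beta>, of "real K / 12"]
      by (fastforce simp: field_simps not_le)
  qed
  have "t \<le> real (nat \<lceil>12 * t\<rceil>) / 12" using \<open>0 \<le> t\<close> by (simp add: field_simps)
  then show ?thesis using agree[of "nat \<lceil>12 * t\<rceil>"] \<open>0 \<le> t\<close> by auto
qed

section \<open>Orthogonal polynomials from moments on the unit circle\<close>

text \<open>Polynomials are coefficient sequences \<open>nat \<Rightarrow> complex\<close>, read up to an explicit degree
  bound \<open>N\<close>. A moment array \<open>\<mu>\<close> stands for \<open>\<mu> a b = \<integral> z\<^sup>a conj(z)\<^sup>b d\<mu>\<close>; then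
  \<open>inner_monom \<mu> N p k = \<langle>p, z\<^sup>k\<rangle>\<close> and \<open>inner_poly \<mu> N p q = \<langle>p, q\<rangle>\<close> in \<open>L\<^sup>2(\<mu>)\<close>.\<close>

definition monomial :: "nat \<Rightarrow> nat \<Rightarrow> complex" where
  "monomial k a = (if a = k then 1 else 0)"

definition times_z :: "(nat \<Rightarrow> complex) \<Rightarrow> nat \<Rightarrow> complex" where
  "times_z p a = (if a = 0 then 0 else p (a - 1))"

text \<open>The reversed polynomial \<open>p\<^sup>*(z) = z\<^sup>n conj (p (1 / conj z))\<close>.\<close>

definition reversed :: "nat \<Rightarrow> (nat \<Rightarrow> complex) \<Rightarrow> nat \<Rightarrow> complex" where
  "reversed n p a = (if a \<le> n then cnj (p (n - a)) else 0)"

definition degree_le :: "nat \<Rightarrow> (nat \<Rightarrow> complex) \<Rightarrow> bool" where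
  "degree_le N p \<longleftrightarrow> (\<forall>a>N. p a = 0)"

definition eval_coeffs :: "nat \<Rightarrow> (nat \<Rightarrow> complex) \<Rightarrow> complex \<Rightarrow> complex" where
  "eval_coeffs N p z = (\<Sum>a\<le>N. p a * z ^ a)"

definition inner_monom :: "(nat \<Rightarrow> nat \<Rightarrow> complex) \<Rightarrow> nat \<Rightarrow> (nat \<Rightarrow> complex) \<Rightarrow> nat \<Rightarrow> complex" where
  "inner_monom \<mu> N p k = (\<Sum>a\<le>N. p a * \<mu> a k)"

definition inner_poly ::
    "(nat \<Rightarrow> nat \<Rightarrow> complex) \<Rightarrow> nat \<Rightarrow> (nat \<Rightarrow> complex) \<Rightarrow> (nat \<Rightarrow> complex) \<Rightarrow> complex" where
  "inner_poly \<mu> N p q = (\<Sum>b\<le>N. cnj (q b) * inner_monom \<mu> N p b)"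

lemma sum_atMost_reflect: "(\<Sum>x\<le>n. f x (n - x)) = (\<Sum>x\<le>(n::nat). f (n - x) x)"
  by (rule sum.reindex_bij_witness[of _ "\<lambda>x. n - x" "\<lambda>x. n - x"]) auto

lemma times_z_0 [simp]: "times_z p 0 = 0" and times_z_Suc [simp]: "times_z p (Suc a) = p a"
  by (simp_all add: times_z_def)

lemma degree_le_reversed: "degree_le n (reversed n p)"
  by (simp add: degree_le_def reversed_def)

lemma reversed_monomial: "k \<le> n \<Longrightarrow> reversed n (monomial (n - k)) = monomial k"
  by (auto simp: reversed_def monomial_def fun_eq_iff)

lemma inner_monom_degree_le:
  "degree_le N p \<Longrightarrow> N \<le> M \<Longrightarrow> inner_monom \<mu> M p k = inner_monom \<mu> N p k"
  unfolding inner_monom_def by (rule sum.mono_neutral_right) (auto simp: degree_le_def)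

lemma inner_poly_degree_le:
  assumes "degree_le N p" "degree_le N q" "N \<le> M"
  shows "inner_poly \<mu> M p q = inner_poly \<mu> N p q"
  unfolding inner_poly_def inner_monom_degree_le[OF assms(1,3)]
  by (rule sum.mono_neutral_right) (use assms in \<open>auto simp: degree_le_def\<close>)

lemma inner_poly_monomial:
  assumes "k \<le> N"
  shows "inner_poly \<mu> N p (monomial k) = inner_monom \<mu> N p k"
proof -
  have "inner_poly \<mu> N p (monomial k) = (\<Sum>b\<le>N. if b = k then inner_monom \<mu> N p b else 0)"
    unfolding inner_poly_def by (intro sum.cong) (auto simp: monomial_def)
  then show ?thesis using assms by simp
qed

lemma inner_monom_lincomb:
  "inner_monom \<mu> N (\<lambda>a. p a + c * q a) k = inner_monom \<mu> N p k + c * inner_monom \<mu> N q k"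
  "inner_monom \<mu> N (\<lambda>a. p a - c * q a) k = inner_monom \<mu> N p k - c * inner_monom \<mu> N q k"
  unfolding inner_monom_def
  by (simp_all add: algebra_simps sum.distrib sum_subtractf sum_distrib_left)

lemma inner_poly_lincomb:
  "inner_poly \<mu> N (\<lambda>a. p a + c * q a) r = inner_poly \<mu> N p r + c * inner_poly \<mu> N q r"
  "inner_poly \<mu> N (\<lambda>a. p a - c * q a) r = inner_poly \<mu> N p r - c * inner_poly \<mu> N q r"
  unfolding inner_poly_def inner_monom_lincomb
  by (simp_all add: algebra_simps sum.distrib sum_subtractf sum_distrib_left)

lemma inner_monom_times_z_eq: "inner_monom \<mu> (Suc N) (times_z p) k = (\<Sum>a\<le>N. p a * \<mu> (Suc a) k)"
  unfolding inner_monom_def by (subst sum.atMost_Suc_shift) simp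

text \<open>Monic orthogonal polynomials via the Szeg\<H>o recursion
  \<open>\<Phi>\<^sub>n\<^sub>+\<^sub>1 = z \<Phi>\<^sub>n - \<beta>\<^sub>n \<Phi>\<^sub>n\<^sup>*\<close>, with \<open>\<beta>\<^sub>n\<close> chosen to make \<open>\<Phi>\<^sub>n\<^sub>+\<^sub>1\<close> orthogonal to \<open>1\<close>.\<close>

primrec opuc :: "(nat \<Rightarrow> nat \<Rightarrow> complex) \<Rightarrow> nat \<Rightarrow> nat \<Rightarrow> complex" where
  "opuc \<mu> 0 = monomial 0"
| "opuc \<mu> (Suc n) = (\<lambda>a. times_z (opuc \<mu> n) a -
      inner_monom \<mu> (Suc n) (times_z (opuc \<mu> n)) 0 / inner_poly \<mu> n (opuc \<mu> n) (opuc \<mu> n)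
      * reversed n (opuc \<mu> n) a)"

definition opuc_sqnorm :: "(nat \<Rightarrow> nat \<Rightarrow> complex) \<Rightarrow> nat \<Rightarrow> complex" where
  "opuc_sqnorm \<mu> n = inner_poly \<mu> n (opuc \<mu> n) (opuc \<mu> n)"

text \<open>This is the complex conjugate of the Verblunsky coefficient in Simon's convention
  \<open>\<Phi>\<^sub>n\<^sub>+\<^sub>1 = z \<Phi>\<^sub>n - conj \<alpha>\<^sub>n \<Phi>\<^sub>n\<^sup>*\<close>; it solves the same Schur flow.\<close>

definition verblunsky :: "(nat \<Rightarrow> nat \<Rightarrow> complex) \<Rightarrow> nat \<Rightarrow> complex" where
  "verblunsky \<mu> n = - opuc \<mu> (Suc n) 0"

lemma degree_le_opuc: "degree_le n (opuc \<mu> n)" and opuc_top: "opuc \<mu> n n = 1"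
proof -
  have "degree_le n (opuc \<mu> n) \<and> opuc \<mu> n n = 1"
    by (induction n) (auto simp: degree_le_def monomial_def times_z_def reversed_def)
  then show "degree_le n (opuc \<mu> n)" "opuc \<mu> n n = 1" by auto
qed

lemma verblunsky_eq:
  "verblunsky \<mu> n = inner_monom \<mu> (Suc n) (times_z (opuc \<mu> n)) 0 / opuc_sqnorm \<mu> n"
  by (simp add: verblunsky_def opuc_sqnorm_def reversed_def opuc_top)

lemma opuc_Suc:
  "opuc \<mu> (Suc n) = (\<lambda>a. times_z (opuc \<mu> n) a - verblunsky \<mu> n * reversed n (opuc \<mu> n) a)"
  by (simp add: verblunsky_eq opuc_sqnorm_def)

declare opuc.simps(2) [simp del]

lemma opuc_at_0: "opuc \<mu> n 0 = (if n = 0 then 1 else - verblunsky \<mu> (n - 1))"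
  by (cases n) (simp_all add: monomial_def verblunsky_def)

lemma verblunsky_0: "verblunsky \<mu> 0 = \<mu> 1 0 / \<mu> 0 0"
  by (simp add: verblunsky_eq opuc_sqnorm_def inner_poly_def inner_monom_def monomial_def)

locale circle_moments =
  fixes \<mu> :: "nat \<Rightarrow> nat \<Rightarrow> complex"
  assumes moment_Suc_Suc: "\<mu> (Suc a) (Suc b) = \<mu> a b"
    and cnj_moment: "cnj (\<mu> a b) = \<mu> b a"
    and inner_poly_self_pos: "\<exists>a\<le>N. p a \<noteq> 0 \<Longrightarrow> 0 < Re (inner_poly \<mu> N p p)"
begin

lemma moment_add_add: "\<mu> (a + c) (b + c) = \<mu> a b"
  by (induction c) (simp_all add: moment_Suc_Suc)

lemma moment_diff_diff: "a \<le> n \<Longrightarrow> b \<le> n \<Longrightarrow> \<mu> (n - a) (n - b) = \<mu> b a"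
  using moment_add_add[of "n - a" b "n - b"] moment_add_add[of b "n - a" a]
  by (simp add: add.commute)

lemma cnj_inner_poly: "cnj (inner_poly \<mu> N p q) = inner_poly \<mu> N q p"
proof -
  have "cnj (inner_poly \<mu> N p q) = (\<Sum>b\<le>N. \<Sum>a\<le>N. q b * cnj (p a) * \<mu> b a)"
    unfolding inner_poly_def inner_monom_def
    by (simp add: sum_distrib_left cnj_moment mult_ac)
  also have "\<dots> = inner_poly \<mu> N q p"
    unfolding inner_poly_def inner_monom_def
    by (subst sum.swap) (simp add: sum_distrib_left mult_ac)
  finally show ?thesis .
qed

lemma inner_monom_times_z: "inner_monom \<mu> (Suc N) (times_z p) (Suc k) = inner_monom \<mu> N p k"
  unfolding inner_monom_times_z_eq by (simp add: inner_monom_def moment_Suc_Suc)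

lemma inner_poly_times_z: "inner_poly \<mu> (Suc N) (times_z p) (times_z q) = inner_poly \<mu> N p q"
  unfolding inner_poly_def by (subst sum.atMost_Suc_shift) (simp add: inner_monom_times_z)

lemma inner_poly_reversed: "inner_poly \<mu> n (reversed n p) (reversed n q) = inner_poly \<mu> n q p"
proof -
  have "inner_poly \<mu> n (reversed n p) (reversed n q) =
        (\<Sum>b\<le>n. \<Sum>a\<le>n. q (n - b) * cnj (p (n - a)) * \<mu> a b)"
    unfolding inner_poly_def inner_monom_def reversed_def by (simp add: sum_distrib_left mult_ac)
  also have "\<dots> = (\<Sum>b\<le>n. \<Sum>a\<le>n. q (n - b) * cnj (p a) * \<mu> (n - a) b)"
  proof (rule sum.cong[OF refl])
    fix b
    show "(\<Sum>a\<le>n. q (n - b) * cnj (p (n - a)) * \<mu> a b) = (\<Sum>a\<le>n. q (n - b) * cnj (p a) * \<mu> (n - a) b)"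
      using sum_atMost_reflect[of "\<lambda>u v. q (n - b) * cnj (p v) * \<mu> u b" n] by simp
  qed
  also have "\<dots> = (\<Sum>b\<le>n. \<Sum>a\<le>n. q b * cnj (p a) * \<mu> (n - a) (n - b))"
    using sum_atMost_reflect[of "\<lambda>u v. \<Sum>a\<le>n. q v * cnj (p a) * \<mu> (n - a) u" n] by simp
  also have "\<dots> = (\<Sum>b\<le>n. \<Sum>a\<le>n. q b * cnj (p a) * \<mu> b a)"
    by (intro sum.cong refl) (simp add: moment_diff_diff)
  also have "\<dots> = inner_poly \<mu> n q p"
    unfolding inner_poly_def inner_monom_def
    by (subst sum.swap) (simp add: sum_distrib_left mult_ac)
  finally show ?thesis .
qed

lemma inner_monom_reversed:
  "k \<le> n \<Longrightarrow> inner_monom \<mu> n (reversed n p) k = cnj (inner_monom \<mu> n p (n - k))"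
  by (metis cnj_inner_poly diff_le_self inner_poly_monomial inner_poly_reversed reversed_monomial)

lemma opuc_sqnorm_pos: "0 < Re (opuc_sqnorm \<mu> n)"
  unfolding opuc_sqnorm_def using opuc_top[of \<mu> n] by (intro inner_poly_self_pos) auto

lemma opuc_sqnorm_nonzero: "opuc_sqnorm \<mu> n \<noteq> 0"
  using opuc_sqnorm_pos[of n] by auto

lemma cnj_opuc_sqnorm: "cnj (opuc_sqnorm \<mu> n) = opuc_sqnorm \<mu> n"
  unfolding opuc_sqnorm_def by (rule cnj_inner_poly)

context
  fixes n :: nat
  assumes orth: "\<And>k. k < n \<Longrightarrow> inner_monom \<mu> n (opuc \<mu> n) k = 0"
begin

lemma opuc_sqnorm_eq_inner_monom_if_orthogonal: "opuc_sqnorm \<mu> n = inner_monom \<mu> n (opuc \<mu> n) n"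
proof -
  have "opuc_sqnorm \<mu> n = (\<Sum>b\<le>n. cnj (opuc \<mu> n b) * inner_monom \<mu> n (opuc \<mu> n) b)"
    by (simp add: opuc_sqnorm_def inner_poly_def)
  also have "\<dots> = cnj (opuc \<mu> n n) * inner_monom \<mu> n (opuc \<mu> n) n"
    by (rule sum.remove[where x = n, THEN trans]) (auto simp: orth intro!: sum.neutral)
  finally show ?thesis by (simp add: opuc_top)
qed

lemma inner_monom_reversed_opuc_if_orthogonal:
  "k \<le> n \<Longrightarrow> inner_monom \<mu> n (reversed n (opuc \<mu> n)) k = (if k = 0 then opuc_sqnorm \<mu> n else 0)"
  using inner_monom_reversed[of k n "opuc \<mu> n"] orth[of "n - k"]
  by (cases "k = 0") (auto simp: cnj_opuc_sqnorm simp flip: opuc_sqnorm_eq_inner_monom_if_orthogonal)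

lemma opuc_Suc_orthogonal: "k < Suc n \<Longrightarrow> inner_monom \<mu> (Suc n) (opuc \<mu> (Suc n)) k = 0"
proof -
  assume k: "k < Suc n"
  have "inner_monom \<mu> (Suc n) (opuc \<mu> (Suc n)) k =
        inner_monom \<mu> (Suc n) (times_z (opuc \<mu> n)) k
        - verblunsky \<mu> n * inner_monom \<mu> n (reversed n (opuc \<mu> n)) k"
    using inner_monom_degree_le[OF degree_le_reversed, of n "Suc n"]
    by (simp add: opuc_Suc inner_monom_lincomb)
  also have "\<dots> = 0"
  proof (cases k)
    case 0
    then show ?thesis
      by (simp add: inner_monom_reversed_opuc_if_orthogonal verblunsky_eq opuc_sqnorm_nonzero)
  next
    case (Suc k')
    then show ?thesis
      using k by (simp add: inner_monom_times_z orth inner_monom_reversed_opuc_if_orthogonal)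
  qed
  finally show ?thesis .
qed

end

lemma opuc_orthogonal: "k < n \<Longrightarrow> inner_monom \<mu> n (opuc \<mu> n) k = 0"
proof (induction n arbitrary: k)
  case (Suc n)
  then show ?case using opuc_Suc_orthogonal by blast
qed simp

lemmas opuc_sqnorm_eq_inner_monom = opuc_sqnorm_eq_inner_monom_if_orthogonal[OF opuc_orthogonal]
lemmas inner_monom_reversed_opuc = inner_monom_reversed_opuc_if_orthogonal[OF opuc_orthogonal]

lemma inner_poly_opuc_left:
  assumes "degree_le n q"
  shows "inner_poly \<mu> n (opuc \<mu> n) q = cnj (q n) * opuc_sqnorm \<mu> n"
proof -
  have "inner_poly \<mu> n (opuc \<mu> n) q = (\<Sum>b\<le>n. cnj (q b) * inner_monom \<mu> n (opuc \<mu> n) b)"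
    by (simp add: inner_poly_def)
  also have "\<dots> = cnj (q n) * inner_monom \<mu> n (opuc \<mu> n) n"
    by (rule sum.remove[where x = n, THEN trans]) (auto simp: opuc_orthogonal intro!: sum.neutral)
  finally show ?thesis by (simp add: opuc_sqnorm_eq_inner_monom)
qed

lemma inner_poly_reversed_opuc_right:
  assumes "degree_le n p"
  shows "inner_poly \<mu> n p (reversed n (opuc \<mu> n)) = p 0 * opuc_sqnorm \<mu> n"
proof -
  have "inner_poly \<mu> n (reversed n (opuc \<mu> n)) p
        = (\<Sum>b\<le>n. cnj (p b) * inner_monom \<mu> n (reversed n (opuc \<mu> n)) b)"
    by (simp add: inner_poly_def)
  also have "\<dots> = cnj (p 0) * opuc_sqnorm \<mu> n"
    by (rule sum.remove[where x = 0, THEN trans]) (auto simp: inner_monom_reversed_opuc intro!: sum.neutral)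
  finally show ?thesis
    by (metis cnj_inner_poly cnj_opuc_sqnorm complex_cnj_cnj complex_cnj_mult)
qed

lemma inner_poly_times_z_reversed_opuc:
  "inner_poly \<mu> (Suc n) (times_z (opuc \<mu> n)) (reversed n (opuc \<mu> n)) = verblunsky \<mu> n * opuc_sqnorm \<mu> n"
proof -
  let ?P = "opuc \<mu> n" and ?Q = "opuc \<mu> (Suc n)"
  have zP: "times_z ?P = (\<lambda>a. ?Q a + verblunsky \<mu> n * reversed n ?P a)"
    by (simp add: opuc_Suc fun_eq_iff)
  have "inner_poly \<mu> (Suc n) ?Q (reversed n ?P) = 0"
    using inner_poly_opuc_left[of "Suc n" "reversed n ?P"] by (simp add: degree_le_def reversed_def)
  moreover have "inner_poly \<mu> (Suc n) (reversed n ?P) (reversed n ?P) = opuc_sqnorm \<mu> n"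
    using inner_poly_degree_le[OF degree_le_reversed degree_le_reversed, of n "Suc n"]
    by (simp add: inner_poly_reversed opuc_sqnorm_def)
  ultimately show ?thesis
    by (subst zP) (simp only: inner_poly_lincomb add_0)
qed

lemma opuc_sqnorm_Suc:
  "opuc_sqnorm \<mu> (Suc n) = of_real (1 - (norm (verblunsky \<mu> n))\<^sup>2) * opuc_sqnorm \<mu> n"
proof -
  let ?P = "opuc \<mu> n" and ?\<beta> = "verblunsky \<mu> n"
  have cross: "inner_poly \<mu> (Suc n) (reversed n ?P) (times_z ?P) = cnj ?\<beta> * opuc_sqnorm \<mu> n"
    using cnj_inner_poly[of "Suc n" "times_z ?P" "reversed n ?P"]
    by (simp add: inner_poly_times_z_reversed_opuc cnj_opuc_sqnorm)
  have degree: "degree_le (Suc n) (times_z ?P)"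
    using degree_le_opuc[of n \<mu>] by (simp add: degree_le_def times_z_def)
  have "opuc_sqnorm \<mu> (Suc n) = inner_poly \<mu> (Suc n) (opuc \<mu> (Suc n)) (times_z ?P)"
    using inner_poly_opuc_left[OF degree] by (simp add: opuc_top)
  also have "\<dots> = inner_poly \<mu> (Suc n) (times_z ?P) (times_z ?P)
                  - ?\<beta> * inner_poly \<mu> (Suc n) (reversed n ?P) (times_z ?P)"
    by (simp only: opuc_Suc inner_poly_lincomb)
  also have "\<dots> = opuc_sqnorm \<mu> n - ?\<beta> * (cnj ?\<beta> * opuc_sqnorm \<mu> n)"
    by (simp only: inner_poly_times_z cross opuc_sqnorm_def)
  also have "\<dots> = (1 - ?\<beta> * cnj ?\<beta>) * opuc_sqnorm \<mu> n"
    by (simp add: algebra_simps)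
  also have "\<dots> = of_real (1 - (norm ?\<beta>)\<^sup>2) * opuc_sqnorm \<mu> n"
    by (simp only: of_real_diff of_real_1 complex_norm_square)
  finally show ?thesis .
qed

lemma norm_verblunsky_less_1: "norm (verblunsky \<mu> n) < 1"
proof -
  have "0 < (1 - (norm (verblunsky \<mu> n))\<^sup>2) * Re (opuc_sqnorm \<mu> n)"
    using opuc_sqnorm_pos[of "Suc n"] by (simp add: opuc_sqnorm_Suc)
  then have "(norm (verblunsky \<mu> n))\<^sup>2 < 1"
    using opuc_sqnorm_pos[of n] by (simp add: zero_less_mult_iff)
  then show ?thesis
    using abs_square_less_1[of "norm (verblunsky \<mu> n)"] by simp
qed

end

section \<open>Verblunsky coefficients of a moment flow solve the Schur flow\<close>

text \<open>The derivative law is the one satisfied by the moments of \<open>e\<^sup>2\<^sup>t\<^sup>c\<^sup>o\<^sup>s\<^sup>\<theta> d\<mu>\<close>,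
  because \<open>2 cos \<theta> = z + conj z\<close> on the unit circle.\<close>

locale moment_flow =
  fixes M :: "real \<Rightarrow> nat \<Rightarrow> nat \<Rightarrow> complex"
  assumes circle_moments: "circle_moments (M t)"
    and has_vector_derivative_moment:
      "((\<lambda>s. M s a b) has_vector_derivative M t (Suc a) b + M t a (Suc b)) (at t)"
begin

abbreviation verblunsky_flow :: "nat \<Rightarrow> real \<Rightarrow> complex" where
  "verblunsky_flow n t \<equiv> verblunsky (M t) n"

lemma inner_monom_has_vector_derivative:
  assumes "\<And>a. ((\<lambda>s. p s a) has_vector_derivative p' a) (at t)"
  shows "((\<lambda>s. inner_monom (M s) N (p s) k) has_vector_derivative
           inner_monom (M t) N p' k + inner_monom (M t) (Suc N) (times_z (p t)) k
           + inner_monom (M t) N (p t) (Suc k)) (at t)"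
proof -
  have "((\<lambda>s. inner_monom (M s) N (p s) k) has_vector_derivative
          (\<Sum>a\<le>N. p t a * (M t (Suc a) k + M t a (Suc k)) + p' a * M t a k)) (at t)"
    unfolding inner_monom_def
    by (intro has_vector_derivative_sum has_vector_derivative_mult assms has_vector_derivative_moment)
  moreover have "(\<Sum>a\<le>N. p t a * (M t (Suc a) k + M t a (Suc k)) + p' a * M t a k) =
      inner_monom (M t) N p' k + inner_monom (M t) (Suc N) (times_z (p t)) k
      + inner_monom (M t) N (p t) (Suc k)"
    unfolding inner_monom_times_z_eq by (simp add: inner_monom_def sum.distrib algebra_simps)
  ultimately show ?thesis by simp
qed

lemma moment_differentiable: "(\<lambda>s. M s a b) differentiable (at t)"
  using has_vector_derivative_moment by (rule differentiableI_vector)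

lemma inner_monom_differentiable:
  assumes "\<And>a. (\<lambda>s. p s a) differentiable (at t)"
  shows "(\<lambda>s. inner_monom (M s) N (p s) k) differentiable (at t)"
  unfolding inner_monom_def
  by (intro differentiable_sum ballI finite_atMost differentiable_mult assms moment_differentiable)

lemma inner_poly_differentiable:
  assumes "\<And>a. (\<lambda>s. p s a) differentiable (at t)" "\<And>a. (\<lambda>s. q s a) differentiable (at t)"
  shows "(\<lambda>s. inner_poly (M s) N (p s) (q s)) differentiable (at t)"
  unfolding inner_poly_def using assms(2)
  by (intro differentiable_sum ballI finite_atMost differentiable_mult inner_monom_differentiable assms(1))
     (auto simp: differentiable_cnj_iff)

lemma opuc_differentiable: "(\<lambda>s. opuc (M s) n a) differentiable (at t)"
proof (induction n arbitrary: a t)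
  case 0
  then show ?case by simp
next
  case (Suc n)
  have times_z: "(\<lambda>s. times_z (opuc (M s) n) a) differentiable (at t)" for a t
    using Suc by (cases a) auto
  have reversed: "(\<lambda>s. reversed n (opuc (M s) n) a) differentiable (at t)" for a t
    using Suc by (cases "a \<le> n") (auto simp: reversed_def differentiable_cnj_iff)
  have "(\<lambda>s. verblunsky (M s) n) differentiable (at t)"
    unfolding verblunsky_eq opuc_sqnorm_def
    by (intro differentiable_divide inner_monom_differentiable inner_poly_differentiable times_z Suc)
       (metis circle_moments circle_moments.opuc_sqnorm_nonzero opuc_sqnorm_def)
  then show ?case
    unfolding opuc_Suc by (intro differentiable_diff differentiable_mult times_z reversed)
qed

definition opuc_deriv :: "real \<Rightarrow> nat \<Rightarrow> nat \<Rightarrow> complex" where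
  "opuc_deriv t n a = vector_derivative (\<lambda>s. opuc (M s) n a) (at t)"

lemma has_vector_derivative_opuc: "((\<lambda>s. opuc (M s) n a) has_vector_derivative opuc_deriv t n a) (at t)"
  unfolding opuc_deriv_def using opuc_differentiable vector_derivative_works by blast

text \<open>The leading coefficient of a monic polynomial does not move.\<close>

lemma degree_le_opuc_deriv: "degree_le (n - 1) (opuc_deriv t n)"
proof -
  have "opuc_deriv t n a = 0" if "n \<le> a" for a
  proof -
    have "(\<lambda>s. opuc (M s) n a) = (\<lambda>s. if a = n then 1 else 0)"
      using that degree_le_opuc[of n] opuc_top[of _ n] by (auto simp: degree_le_def fun_eq_iff)
    then show ?thesis by (simp add: opuc_deriv_def)
  qed
  then show ?thesis by (simp add: degree_le_def)
qed

lemma inner_monom_opuc_deriv: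
  assumes "k < n"
  shows "inner_monom (M t) n (opuc_deriv t n) k =
    - inner_monom (M t) (Suc n) (times_z (opuc (M t) n)) k - inner_monom (M t) n (opuc (M t) n) (Suc k)"
proof -
  have "((\<lambda>s. inner_monom (M s) n (opuc (M s) n) k) has_vector_derivative
          inner_monom (M t) n (opuc_deriv t n) k + inner_monom (M t) (Suc n) (times_z (opuc (M t) n)) k
          + inner_monom (M t) n (opuc (M t) n) (Suc k)) (at t)"
    by (rule inner_monom_has_vector_derivative) (rule has_vector_derivative_opuc)
  moreover have "(\<lambda>s. inner_monom (M s) n (opuc (M s) n) k) = (\<lambda>s. 0)"
    using circle_moments.opuc_orthogonal[OF circle_moments] assms by auto
  ultimately have "inner_monom (M t) n (opuc_deriv t n) k + inner_monom (M t) (Suc n) (times_z (opuc (M t) n)) k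
          + inner_monom (M t) n (opuc (M t) n) (Suc k) = 0"
    using vector_derivative_unique_at has_vector_derivative_const by metis
  then show ?thesis by (simp add: algebra_simps eq_neg_iff_add_eq_0)
qed

lemma inner_monom_opuc_deriv_Suc:
  assumes "b \<le> n"
  shows "inner_monom (M t) n (opuc_deriv t (Suc n)) b =
    - (if b = 0 then verblunsky (M t) (Suc n) * opuc_sqnorm (M t) (Suc n) else 0)
    - (if b = n then opuc_sqnorm (M t) (Suc n) else 0)"
proof -
  interpret circle_moments "M t" by (rule circle_moments)
  have "inner_monom (M t) n (opuc_deriv t (Suc n)) b = inner_monom (M t) (Suc n) (opuc_deriv t (Suc n)) b"
    using inner_monom_degree_le[OF degree_le_opuc_deriv[of "Suc n" t], where M = "Suc n"] by simp
  also have "\<dots> = - inner_monom (M t) (Suc (Suc n)) (times_z (opuc (M t) (Suc n))) b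
                  - inner_monom (M t) (Suc n) (opuc (M t) (Suc n)) (Suc b)"
    using assms by (simp add: inner_monom_opuc_deriv)
  also have "inner_monom (M t) (Suc (Suc n)) (times_z (opuc (M t) (Suc n))) b =
             (if b = 0 then verblunsky (M t) (Suc n) * opuc_sqnorm (M t) (Suc n) else 0)"
    using assms opuc_sqnorm_nonzero
    by (cases b) (simp_all add: verblunsky_eq inner_monom_times_z opuc_orthogonal)
  also have "inner_monom (M t) (Suc n) (opuc (M t) (Suc n)) (Suc b) =
             (if b = n then opuc_sqnorm (M t) (Suc n) else 0)"
    using assms by (auto simp: opuc_sqnorm_eq_inner_monom opuc_orthogonal)
  finally show ?thesis .
qed

text \<open>Both sides arise from \<open>\<langle>\<Phi>\<^sub>n\<^sub>+\<^sub>1', \<Phi>\<^sub>n\<^sup>*\<rangle>\<close>: since \<open>\<Phi>\<^sub>n\<^sup>*\<close> is orthogonal to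
  \<open>z, \<dots>, z\<^sup>n\<close> it equals \<open>\<Phi>\<^sub>n\<^sub>+\<^sub>1'(0) \<kappa>\<^sub>n\<close> with \<open>\<kappa>\<^sub>n = opuc_sqnorm (M t) n\<close>, and differentiating the orthogonality
  relations of \<open>\<Phi>\<^sub>n\<^sub>+\<^sub>1\<close> evaluates it in terms of \<open>\<beta>\<^sub>n\<^sub>+\<^sub>1\<close>, \<open>\<Phi>\<^sub>n(0)\<close> and
  \<open>\<kappa>\<^sub>n\<^sub>+\<^sub>1 = (1 - |\<beta>\<^sub>n|\<^sup>2) \<kappa>\<^sub>n\<close>.\<close>

lemma opuc_deriv_Suc_0:
  "opuc_deriv t (Suc n) 0 = - (of_real (1 - (norm (verblunsky_flow n t))\<^sup>2)
     * (verblunsky_flow (Suc n) t - schur_prev verblunsky_flow n t))"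
proof -
  interpret circle_moments "M t" by (rule circle_moments)
  let ?D = "opuc_deriv t (Suc n)" and ?R = "reversed n (opuc (M t) n)"
    and ?\<kappa> = "opuc_sqnorm (M t) (Suc n)"
  have "inner_poly (M t) n ?D ?R =
      - (\<Sum>b\<le>n. if b = 0 then cnj (?R b) * (verblunsky_flow (Suc n) t * ?\<kappa>) else 0)
      - (\<Sum>b\<le>n. if b = n then cnj (?R b) * ?\<kappa> else 0)"
    unfolding inner_poly_def sum_negf[symmetric] sum_subtractf[symmetric]
    by (intro sum.cong refl) (simp add: inner_monom_opuc_deriv_Suc algebra_simps)
  also have "\<dots> = - (verblunsky_flow (Suc n) t + opuc (M t) n 0) * ?\<kappa>"
    by (simp add: reversed_def opuc_top algebra_simps)
  finally have "?D 0 * opuc_sqnorm (M t) n =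
      - (verblunsky_flow (Suc n) t - schur_prev verblunsky_flow n t) * ?\<kappa>"
    using degree_le_opuc_deriv[of "Suc n" t]
    by (simp add: inner_poly_reversed_opuc_right opuc_at_0 schur_prev_def)
  also have "\<dots> = - (of_real (1 - (norm (verblunsky_flow n t))\<^sup>2)
      * (verblunsky_flow (Suc n) t - schur_prev verblunsky_flow n t)) * opuc_sqnorm (M t) n"
    by (simp add: opuc_sqnorm_Suc algebra_simps)
  finally show ?thesis
    using opuc_sqnorm_nonzero[of n] by (metis mult_right_cancel)
qed

lemma has_vector_derivative_verblunsky:
  "(verblunsky_flow n has_vector_derivative
     of_real (1 - (norm (verblunsky_flow n t))\<^sup>2)
     * (verblunsky_flow (Suc n) t - schur_prev verblunsky_flow n t)) (at t)"
proof -
  have "((\<lambda>s. - opuc (M s) (Suc n) 0) has_vector_derivative - opuc_deriv t (Suc n) 0) (at t)"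
    by (intro derivative_intros has_vector_derivative_opuc)
  then show ?thesis
    by (simp add: opuc_deriv_Suc_0 flip: verblunsky_def)
qed

theorem schur_flow_solution_verblunsky:
  "schur_flow_solution (\<lambda>n. verblunsky_flow n 0) verblunsky_flow"
  unfolding schur_flow_solution_def
  using has_vector_derivative_verblunsky circle_moments.norm_verblunsky_less_1[OF circle_moments]
  by auto

end

section \<open>Discrete measures on the unit circle\<close>

definition discrete_moment :: "(nat \<Rightarrow> real) \<Rightarrow> (nat \<Rightarrow> complex) \<Rightarrow> nat \<Rightarrow> nat \<Rightarrow> complex" where
  "discrete_moment w z a b = (\<Sum>j. of_real (w j) * (z j ^ a * cnj (z j) ^ b))"

lemma summable_weighted_bounded:
  fixes w :: "nat \<Rightarrow> real" and c :: "nat \<Rightarrow> complex"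
  assumes "summable w" "\<And>j. 0 \<le> w j" "\<And>j. norm (c j) \<le> 1"
  shows "summable (\<lambda>j. of_real (w j) * c j)"
proof (rule summable_norm_cancel, rule summable_comparison_test[OF _ assms(1)])
  show "\<exists>N. \<forall>j\<ge>N. norm (norm (of_real (w j) * c j)) \<le> w j"
    using assms(2,3) by (auto simp: norm_mult intro!: exI[of _ 0] mult_left_le)
qed

lemma discrete_moment_sums:
  assumes "summable w" "\<And>j. 0 \<le> w j" "\<And>j. norm (z j) = 1"
  shows "(\<lambda>j. of_real (w j) * (z j ^ a * cnj (z j) ^ b)) sums discrete_moment w z a b"
  unfolding discrete_moment_def using assms
  by (intro summable_sums summable_weighted_bounded) (auto simp: norm_mult norm_power)

lemma inner_poly_discrete_moment_sums:
  assumes "summable w" "\<And>j. 0 \<le> w j" "\<And>j. norm (z j) = 1"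
  shows "(\<lambda>j. of_real (w j) * (eval_coeffs N p (z j) * cnj (eval_coeffs N q (z j))))
           sums inner_poly (discrete_moment w z) N p q"
proof -
  have "(\<lambda>j. \<Sum>b\<le>N. cnj (q b) * (\<Sum>a\<le>N. p a * (of_real (w j) * (z j ^ a * cnj (z j) ^ b))))
        sums (\<Sum>b\<le>N. cnj (q b) * (\<Sum>a\<le>N. p a * discrete_moment w z a b))"
    by (intro sums_sum sums_mult discrete_moment_sums assms)
  moreover have "(\<lambda>j. \<Sum>b\<le>N. cnj (q b) * (\<Sum>a\<le>N. p a * (of_real (w j) * (z j ^ a * cnj (z j) ^ b))))
     = (\<lambda>j. of_real (w j) * (eval_coeffs N p (z j) * cnj (eval_coeffs N q (z j))))"
    by (simp add: eval_coeffs_def sum_distrib_left sum_distrib_right mult_ac)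
  ultimately show ?thesis by (simp add: inner_poly_def inner_monom_def)
qed

text \<open>Positive definiteness holds because a nonzero polynomial cannot vanish at infinitely
  many distinct atoms.\<close>

lemma circle_moments_discrete_moment:
  assumes w: "summable w" "\<And>j. 0 < w j" and z: "inj z" "\<And>j. norm (z j) = 1"
  shows "circle_moments (discrete_moment w z)"
proof unfold_locales
  have w_nonneg: "\<And>j. 0 \<le> w j" using w(2) less_imp_le by blast
  have z_cnj: "z j * cnj (z j) = 1" for j
    using complex_norm_square[of "z j"] z(2)[of j] by simp
  fix a b
  have shift: "z j ^ Suc a * cnj (z j) ^ Suc b = (z j * cnj (z j)) * (z j ^ a * cnj (z j) ^ b)" for j
    by (simp add: mult_ac)
  show "discrete_moment w z (Suc a) (Suc b) = discrete_moment w z a b"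
    unfolding discrete_moment_def shift z_cnj by simp
  have "(\<lambda>j. cnj (of_real (w j) * (z j ^ a * cnj (z j) ^ b))) sums cnj (discrete_moment w z a b)"
    using discrete_moment_sums[OF w(1) w_nonneg z(2)] by (simp only: sums_cnj)
  then show "cnj (discrete_moment w z a b) = discrete_moment w z b a"
    using discrete_moment_sums[OF w(1) w_nonneg z(2), where a = b and b = a] by (simp add: mult_ac sums_unique2)
next
  fix N and p :: "nat \<Rightarrow> complex"
  assume "\<exists>a\<le>N. p a \<noteq> 0"
  then have "finite {x. eval_coeffs N p x = 0}"
    unfolding eval_coeffs_def by (rule polyfun_rootbound_finite)
  then have "\<not> range z \<subseteq> {x. eval_coeffs N p x = 0}"
    using z(1) finite_subset range_inj_infinite by blast
  then obtain j where j: "eval_coeffs N p (z j) \<noteq> 0" by auto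
  define f where "f j = w j * (norm (eval_coeffs N p (z j)))\<^sup>2" for j
  have "(\<lambda>j. of_real (f j)) sums inner_poly (discrete_moment w z) N p p"
    using inner_poly_discrete_moment_sums[OF w(1) less_imp_le[OF w(2)] z(2), where N = N and p = p and q = p]
    by (simp add: f_def flip: complex_norm_square)
  then have "f sums Re (inner_poly (discrete_moment w z) N p p)"
    using sums_Re by fastforce
  moreover have "0 < f j" using j w(2)[of j] by (simp add: f_def)
  moreover have "0 \<le> f i" for i using w(2)[of i] by (simp add: f_def)
  ultimately show "0 < Re (inner_poly (discrete_moment w z) N p p)"
    by (metis suminf_pos2 sums_summable sums_unique)
qed

lemma norm_exp_series_term_le:
  fixes w l :: real and x d :: complex
  assumes "0 \<le> w" "\<bar>l\<bar> \<le> 1" "norm d \<le> 1"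
  shows "norm (of_real w * (exp (x * of_real l) * d)) \<le> w * exp (norm x)"
proof -
  have "Re x * l \<le> \<bar>Re x\<bar> * \<bar>l\<bar>"
    using abs_ge_self[of "Re x * l"] by (simp add: abs_mult)
  also have "\<dots> \<le> norm x * 1"
    using assms(2) abs_Re_le_cmod[of x] by (intro mult_mono) auto
  finally have "Re x * l \<le> norm x" by simp
  have "norm (of_real w * (exp (x * of_real l) * d)) = w * (exp (Re x * l) * norm d)"
    using assms(1) by (simp add: norm_mult)
  also have "\<dots> \<le> w * (exp (norm x) * 1)"
    using assms \<open>Re x * l \<le> norm x\<close> by (intro mult_left_mono mult_mono) auto
  finally show ?thesis by simp
qed

lemma has_field_derivative_exp_series:
  fixes w l :: "nat \<Rightarrow> real" and c :: "nat \<Rightarrow> complex"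
  assumes w: "summable w" "\<And>j. 0 \<le> w j" and l: "\<And>j. \<bar>l j\<bar> \<le> 1" and c: "\<And>j. norm (c j) \<le> 1"
  shows "((\<lambda>z. \<Sum>j. of_real (w j) * (exp (z * of_real (l j)) * c j)) has_field_derivative
           (\<Sum>j. of_real (w j) * (exp (z * of_real (l j)) * (of_real (l j) * c j)))) (at z)"
proof -
  let ?f = "\<lambda>j z. of_real (w j) * (exp (z * of_real (l j)) * c j)"
  let ?f' = "\<lambda>j z. of_real (w j) * (exp (z * of_real (l j)) * (of_real (l j) * c j))"
  have lc: "norm (of_real (l j) * c j) \<le> 1" for j
    using l[of j] c[of j] by (simp add: norm_mult mult_le_one)
  define S where "S = ball z 1"
  have "norm (?f' j x) \<le> w j * exp (norm z + 1)" if "x \<in> S" for j x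
  proof -
    have "norm x \<le> norm z + 1"
      using that norm_triangle_ineq2[of x z] by (auto simp: S_def dist_norm norm_minus_commute)
    then have "w j * exp (norm x) \<le> w j * exp (norm z + 1)"
      using w(2)[of j] by (intro mult_left_mono) auto
    then show ?thesis
      by (rule order_trans[OF norm_exp_series_term_le[OF w(2)[of j] l[of j] lc[of j]]])
  qed
  then have unif: "uniformly_convergent_on S (\<lambda>n x. \<Sum>j<n. ?f' j x)"
    by (intro Weierstrass_m_test'[OF _ summable_mult2[OF w(1)]]) auto
  have summable: "summable (\<lambda>j. ?f j z)"
  proof (rule summable_norm_cancel, rule summable_comparison_test[OF _ summable_mult2[OF w(1)]])
    have "norm (?f j z) \<le> w j * exp (norm z)" for j
      by (rule norm_exp_series_term_le[OF w(2)[of j] l[of j] c[of j]])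
    then show "\<exists>N. \<forall>j\<ge>N. norm (norm (?f j z)) \<le> w j * exp (norm z)" by auto
  qed
  have deriv: "(?f j has_field_derivative ?f' j x) (at x within S)" for j x
  proof -
    have "((\<lambda>x. exp (x * of_real (l j))) has_field_derivative exp (x * of_real (l j)) * of_real (l j)) (at x)"
      by (auto intro!: derivative_eq_intros)
    from DERIV_cmult[OF DERIV_cmult_right[OF this, of "c j"], of "of_real (w j)"] show ?thesis
      by (simp add: mult.assoc has_field_derivative_at_within)
  qed
  have "convex S" "z \<in> S" "z \<in> interior S"
    by (simp_all add: S_def)
  then show ?thesis
    using has_field_derivative_series'(2)[of S ?f ?f' z z] deriv unif summable by blast
qed

section \<open>The counterexample\<close>

definition twocos :: "nat \<Rightarrow> real" where
  "twocos j = 1 - 1 / 2 ^ j"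

definition node :: "nat \<Rightarrow> complex" where
  "node j = Complex (twocos j / 2) ((-1) ^ j * sqrt (1 - (twocos j / 2)\<^sup>2))"

definition weight :: "nat \<Rightarrow> real" where
  "weight j = exp (- (4 ^ (j + 2)))"

text \<open>With \<open>node j = e\<^sup>i\<^sup>\<theta>\<close> we have \<open>twocos j = 2 cos \<theta>\<close>, so \<open>mass j t\<close> is the weight of
  \<open>node j\<close> under \<open>e\<^sup>2\<^sup>t\<^sup>c\<^sup>o\<^sup>s\<^sup>\<theta> d\<mu>\<close>; the normalisation of \<open>\<mu>\<^sub>t\<close> is irrelevant for its Verblunsky
  coefficients.\<close>

definition mass :: "nat \<Rightarrow> real \<Rightarrow> real" where
  "mass j t = weight j * exp (t * twocos j)"

definition example_moments :: "real \<Rightarrow> nat \<Rightarrow> nat \<Rightarrow> complex" where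
  "example_moments t = discrete_moment (\<lambda>j. mass j t) node"

lemma twocos_nonneg: "0 \<le> twocos j" and twocos_less_1: "twocos j < 1"
  by (auto simp: twocos_def)

lemma norm_node: "norm (node j) = 1"
proof -
  have "(twocos j / 2)\<^sup>2 \<le> 1"
    using twocos_nonneg[of j] twocos_less_1[of j] by (intro power_le_one) auto
  moreover have "((-1::real) ^ j)\<^sup>2 = 1"
    by (simp flip: power_mult)
  ultimately show ?thesis
    by (simp add: node_def norm_complex_def power_mult_distrib)
qed

lemma node_add_cnj: "node j + cnj (node j) = of_real (twocos j)"
  by (simp add: node_def complex_eq_iff)

lemma inj_node: "inj node"
proof (rule injI)
  fix i j assume "node i = node j"
  then have "Re (node i) = Re (node j)" by simp
  then show "i = j" by (simp add: node_def twocos_def)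
qed

lemma real_plus_1_le_four_power: "real j + 1 \<le> 4 ^ j"
proof -
  have "j < 2 ^ j" by (rule less_exp)
  also have "(2::nat) ^ j \<le> 4 ^ j" by (rule power_mono) auto
  finally have "j + 1 \<le> (4::nat) ^ j" by simp
  then have "real (j + 1) \<le> real (4 ^ j)" by (simp only: of_nat_le_iff)
  then show ?thesis by simp
qed

lemma summable_weight: "summable weight"
proof (rule summable_comparison_test[OF _ summable_geometric[of "exp (-1)"]])
  have "real j \<le> 4 ^ (j + 2)" for j
    using real_plus_1_le_four_power[of j] power_increasing[of j "j + 2" "4::real"] by simp
  then have "weight j \<le> exp (-1) ^ j" for j
    by (simp add: weight_def flip: exp_of_nat_mult)
  then show "\<exists>N. \<forall>j\<ge>N. norm (weight j) \<le> exp (-1) ^ j"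
    by (simp add: weight_def)
qed simp

lemma mass_pos: "0 < mass j t"
  by (simp add: mass_def weight_def)

lemma summable_mass: "summable (\<lambda>j. mass j t)"
proof (rule summable_comparison_test[OF _ summable_mult2[OF summable_weight, of "exp \<bar>t\<bar>"]])
  have "t * twocos j \<le> \<bar>t\<bar> * twocos j" for j
    by (rule mult_right_mono) (auto simp: twocos_nonneg)
  also have "\<bar>t\<bar> * twocos j \<le> \<bar>t\<bar> * 1" for j
    by (rule mult_left_mono) (auto simp: twocos_less_1 less_imp_le)
  finally have "t * twocos j \<le> \<bar>t\<bar>" for j by simp
  then show "\<exists>N. \<forall>j\<ge>N. norm (mass j t) \<le> weight j * exp \<bar>t\<bar>"
    using mass_pos by (simp add: mass_def weight_def)
qed

lemma example_moments_sums:
  "(\<lambda>j. of_real (mass j t) * (node j ^ a * cnj (node j) ^ b)) sums example_moments t a b"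
  unfolding example_moments_def
  by (rule discrete_moment_sums[OF summable_mass less_imp_le[OF mass_pos] norm_node])

lemma moment_flow_example_moments: "moment_flow example_moments"
proof (rule moment_flow.intro)
  fix t :: real and a b :: nat
  show "circle_moments (example_moments t)"
    unfolding example_moments_def
    by (intro circle_moments_discrete_moment summable_mass mass_pos inj_node norm_node)
  let ?c = "\<lambda>a b j. node j ^ a * cnj (node j) ^ b"
  have norm_c: "norm (?c a b j) \<le> 1" for j
    by (simp add: norm_mult norm_power norm_node)
  let ?F = "\<lambda>z. \<Sum>j. of_real (weight j) * (exp (z * of_real (twocos j)) * ?c a b j)"
  have of_real_mass: "complex_of_real (mass j s)
      = of_real (weight j) * exp (of_real s * of_real (twocos j))" for j s
    by (simp add: mass_def of_real_exp)
  have "(?F has_field_derivative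
      (\<Sum>j. of_real (weight j) * (exp (of_real t * of_real (twocos j)) * (of_real (twocos j) * ?c a b j))))
      (at (of_real t))"
    using twocos_nonneg twocos_less_1 less_imp_le
    by (intro has_field_derivative_exp_series summable_weight norm_c) (auto simp: weight_def)
  from has_vector_derivative_real_field[OF this]
  have "((\<lambda>s. example_moments s a b) has_vector_derivative
      (\<Sum>j. of_real (mass j t) * (of_real (twocos j) * ?c a b j))) (at t)"
    by (simp add: example_moments_def discrete_moment_def of_real_mass mult.assoc)
  moreover have "(\<Sum>j. of_real (mass j t) * (of_real (twocos j) * ?c a b j))
      = example_moments t (Suc a) b + example_moments t a (Suc b)"
  proof -
    have "of_real (twocos j) * ?c a b j = ?c (Suc a) b j + ?c a (Suc b) j" for j
      by (simp flip: node_add_cnj add: algebra_simps)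
    then show ?thesis
      using sums_add[OF example_moments_sums[of t "Suc a" b] example_moments_sums[of t a "Suc b"]]
      by (simp add: distrib_left sums_iff)
  qed
  ultimately show "((\<lambda>s. example_moments s a b) has_vector_derivative
      example_moments t (Suc a) b + example_moments t a (Suc b)) (at t)"
    by simp
qed

lemma Im_verblunsky_example_0:
  "Im (verblunsky (example_moments t) 0) = (\<Sum>j. mass j t * Im (node j)) / (\<Sum>j. mass j t)"
proof -
  have "(\<lambda>j. of_real (mass j t)) sums example_moments t 0 0"
    using example_moments_sums[of t 0 0] by simp
  then have "example_moments t 0 0 = of_real (\<Sum>j. mass j t)"
    using sums_of_real[OF summable_sums[OF summable_mass[of t]]] by (rule sums_unique2)
  moreover have "Im (example_moments t 1 0) = (\<Sum>j. mass j t * Im (node j))"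
    using sums_Im[OF example_moments_sums[of t 1 0]] by (simp add: sums_unique)
  ultimately show ?thesis
    by (simp add: verblunsky_0 Im_divide_of_real)
qed

definition dominance_time :: "nat \<Rightarrow> real" where
  "dominance_time k = 2 ^ k * (4 ^ (k + 2) + real k + 4)"

lemma mass_exponent_gap:
  assumes "j \<noteq> k"
  shows "- (4 ^ (j + 2)) + dominance_time k * twocos j
         \<le> - (4 ^ (k + 2)) + dominance_time k * twocos k - 4 - real j"
proof -
  let ?T = "dominance_time k"
  define C :: real where "C = 4 ^ (k + 2) + real k + 4"
  have T_div: "?T / 2 ^ k = C" by (simp add: dominance_time_def C_def)
  have key: "4 ^ (k + 2) + ?T / 2 ^ k + real j + 4 \<le> 4 ^ (j + 2) + ?T / 2 ^ j"
  proof (cases "j < k")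
    case True
    have "(2::real) ^ Suc j \<le> 2 ^ k" by (rule power_increasing) (use True in auto)
    then have "C * (2 * 2 ^ j) / 2 ^ j \<le> C * 2 ^ k / 2 ^ j"
      by (intro divide_right_mono mult_left_mono) (auto simp: C_def)
    then have "2 * C \<le> ?T / 2 ^ j" by (simp add: dominance_time_def C_def mult_ac)
    moreover have "(0::real) \<le> 4 ^ (j + 2)" "real j \<le> real k" using True by auto
    ultimately show ?thesis unfolding T_div C_def by (smt (verit))
  next
    case False
    then have "k < j" using assms by simp
    have "(4::real) ^ (k + 2) \<le> 4 ^ (j + 1)" by (rule power_increasing) (use \<open>k < j\<close> in auto)
    moreover have "real k + real j + 8 \<le> (4::real) ^ (j + 2) / 2"
      using real_plus_1_le_four_power[of j] \<open>k < j\<close> by simp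
    moreover have "0 \<le> ?T / 2 ^ j" by (simp add: dominance_time_def)
    ultimately show ?thesis unfolding T_div C_def by simp
  qed
  have "?T * twocos j = ?T - ?T / 2 ^ j" "?T * twocos k = ?T - ?T / 2 ^ k"
    by (simp_all add: twocos_def algebra_simps)
  then show ?thesis using key by linarith
qed

lemma exp_minus_1_le_half: "exp (-1::real) \<le> 1 / 2"
proof -
  have "2 \<le> exp (1::real)" using exp_ge_add_one_self[of 1] by simp
  then show ?thesis by (simp add: exp_minus field_simps)
qed

lemma mass_dominance:
  assumes "j \<noteq> k"
  shows "mass j (dominance_time k) \<le> exp (-4) * mass k (dominance_time k) * (1 / 2) ^ j"
proof -
  let ?T = "dominance_time k"
  have mass_exp: "mass i ?T = exp (- (4 ^ (i + 2)) + ?T * twocos i)" for i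
    by (simp add: mass_def weight_def mult_exp_exp mult.commute)
  have "mass j ?T \<le> exp (- (4 ^ (k + 2)) + ?T * twocos k - 4 - real j)"
    unfolding mass_exp using mass_exponent_gap[OF assms] by simp
  also have "\<dots> = exp (-4) * mass k ?T * exp (-1) ^ j"
    by (simp add: mass_exp exp_add exp_diff exp_minus field_simps flip: exp_of_nat_mult)
  also have "\<dots> \<le> exp (-4) * mass k ?T * (1 / 2) ^ j"
    using mass_pos[of k ?T] exp_minus_1_le_half by (intro mult_left_mono power_mono) auto
  finally show ?thesis .
qed

lemma suminf_dominant_term:
  fixes f :: "nat \<Rightarrow> real"
  assumes bound: "\<And>j. j \<noteq> k \<Longrightarrow> \<bar>f j\<bar> \<le> C * (1 / 2) ^ j"
  shows "summable f" and "\<bar>(\<Sum>j. f j) - f k\<bar> \<le> 2 * C"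
proof -
  define r where "r j = (if j = k then 0 else f j)" for j
  have "0 \<le> C * (1 / 2) ^ Suc k"
    using bound[of "Suc k"] abs_ge_zero[of "f (Suc k)"] by simp
  then have "0 \<le> C" by (simp add: zero_le_mult_iff power_le_zero_eq)
  then have r_bound: "\<bar>r j\<bar> \<le> C * (1 / 2) ^ j" for j
    using bound by (simp add: r_def)
  have geometric: "(\<lambda>j. C * (1 / 2) ^ j) sums (2 * C)"
    using sums_mult[OF geometric_sums[of "1 / 2 :: real"], of C] by (simp add: mult.commute)
  have "summable (\<lambda>j. \<bar>r j\<bar>)"
    by (rule summable_comparison_test[OF _ sums_summable[OF geometric]]) (use r_bound in auto)
  then have r_sums: "r sums (\<Sum>j. r j)" using summable_rabs_cancel summable_sums by blast
  have f_eq: "f = (\<lambda>j. (if j = k then f k else 0) + r j)"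
    by (auto simp: r_def fun_eq_iff)
  have "f sums (f k + (\<Sum>j. r j))"
    by (subst f_eq) (intro sums_add sums_single r_sums)
  then show "summable f" and "\<bar>(\<Sum>j. f j) - f k\<bar> \<le> 2 * C"
    using suminf_le[of "\<lambda>j. \<bar>r j\<bar>" "\<lambda>j. C * (1 / 2) ^ j"]
      summable_rabs[OF \<open>summable (\<lambda>j. \<bar>r j\<bar>)\<close>] r_bound sums_summable[OF geometric]
      sums_unique[OF geometric] \<open>summable (\<lambda>j. \<bar>r j\<bar>)\<close>
    by (auto simp: sums_iff)
qed

lemma suminf_mass_at_dominance_time:
  assumes "\<And>j. \<bar>g j\<bar> \<le> 3 / 2"
  shows "summable (\<lambda>j. mass j (dominance_time k) * g j)"
    and "\<bar>(\<Sum>j. mass j (dominance_time k) * g j) - mass k (dominance_time k) * g k\<bar>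
           \<le> 3 / 16 * mass k (dominance_time k)"
proof -
  let ?T = "dominance_time k"
  have "\<bar>mass j ?T * g j\<bar> \<le> (3 / 2 * exp (-4) * mass k ?T) * (1 / 2) ^ j" if "j \<noteq> k" for j
  proof -
    have "mass j ?T * \<bar>g j\<bar> \<le> (exp (-4) * mass k ?T * (1 / 2) ^ j) * (3 / 2)"
      by (rule mult_mono[OF mass_dominance[OF that] assms]) (use mass_pos[of k ?T] in simp_all)
    then show ?thesis
      using mass_pos[of j ?T] by (simp add: abs_mult mult_ac)
  qed
  note dominant = suminf_dominant_term[of k "\<lambda>j. mass j ?T * g j", OF this]
  then show "summable (\<lambda>j. mass j ?T * g j)" by blast
  have "exp (-4::real) = exp (-1) ^ 4" by (simp flip: exp_of_nat_mult)
  also have "\<dots> \<le> (1 / 2) ^ 4" using exp_minus_1_le_half by (intro power_mono) auto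
  finally have "2 * (3 / 2 * exp (-4) * mass k ?T) \<le> 3 / 16 * mass k ?T"
    using mass_pos[of k ?T] by (simp add: power_divide)
  then show "\<bar>(\<Sum>j. mass j ?T * g j) - mass k ?T * g k\<bar> \<le> 3 / 16 * mass k ?T"
    using dominant(2) by linarith
qed

lemma abs_Im_node_le_1: "\<bar>Im (node j)\<bar> \<le> 1"
  using abs_Im_le_cmod[of "node j"] norm_node[of j] by simp

lemma summable_mass_Im: "summable (\<lambda>j. mass j t * Im (node j))"
proof (rule summable_comparison_test[OF _ summable_mass])
  show "\<exists>N. \<forall>j\<ge>N. norm (mass j t * Im (node j)) \<le> mass j t"
    using abs_Im_node_le_1 mass_pos by (auto simp: abs_mult less_imp_le intro: mult_left_le)
qed

lemma Im_node_alternating: "4 / 5 \<le> (-1) ^ j * Im (node j)"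
proof -
  have "(twocos j / 2)\<^sup>2 \<le> (1 / 2)\<^sup>2"
    using twocos_nonneg[of j] twocos_less_1[of j] by (intro power_mono) auto
  then have "4 / 5 \<le> sqrt (1 - (twocos j / 2)\<^sup>2)"
    by (intro real_le_rsqrt) (simp add: power2_eq_square)
  moreover have "(-1::real) ^ j * (-1) ^ j = 1"
    by (simp flip: power_mult_distrib)
  ultimately show ?thesis
    by (simp add: node_def flip: mult.assoc)
qed

lemma alternating_verblunsky_example:
  "1 / 2 \<le> (-1) ^ k * Im (verblunsky (example_moments (dominance_time k)) 0)"
proof -
  let ?T = "dominance_time k"
  define g where "g j = (-1) ^ k * Im (node j) - 1 / 2" for j
  have "\<bar>g j\<bar> \<le> 3 / 2" for j
    using abs_triangle_ineq4[of "(-1) ^ k * Im (node j)" "1 / 2"] abs_Im_node_le_1[of j]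
    by (simp add: g_def abs_mult)
  note estimate = suminf_mass_at_dominance_time[of g k, OF this]
  have g_k: "3 / 10 \<le> g k"
    using Im_node_alternating[of k] by (simp add: g_def mult.commute)
  have "0 \<le> (\<Sum>j. mass j ?T * g j)"
    using estimate(2)[unfolded abs_le_iff] mult_left_mono[OF g_k less_imp_le[OF mass_pos[of k ?T]]]
      mass_pos[of k ?T] by linarith
  also have "(\<Sum>j. mass j ?T * g j) = (\<Sum>j. (-1) ^ k * (mass j ?T * Im (node j)) - 1 / 2 * mass j ?T)"
    by (simp add: g_def algebra_simps)
  also have "\<dots> = (-1) ^ k * (\<Sum>j. mass j ?T * Im (node j)) - 1 / 2 * (\<Sum>j. mass j ?T)"
    using suminf_diff[OF summable_mult[OF summable_mass_Im[of ?T], of "(-1) ^ k"] summable_mult[OF summable_mass[of ?T], of "1 / 2"]]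
      suminf_mult[OF summable_mass_Im[of ?T], of "(-1) ^ k"] suminf_mult[OF summable_mass[of ?T], of "1 / 2"]
    by simp
  finally show ?thesis
    using suminf_pos[OF summable_mass mass_pos, of ?T]
    by (simp add: Im_verblunsky_example_0 field_simps)
qed

lemma not_tendsto_of_alternating_signs:
  fixes g :: "real \<Rightarrow> real" and s :: "nat \<Rightarrow> real"
  assumes s: "filterlim s at_top sequentially" and "0 < c"
    and alternating: "\<And>k. c \<le> (-1) ^ k * g (s k)"
  shows "\<not> (g \<longlongrightarrow> L) at_top"
proof
  assume "(g \<longlongrightarrow> L) at_top"
  then have "(\<lambda>k. g (s k)) \<longlonglongrightarrow> L"
    using s by (rule filterlim_compose)
  then obtain N where N: "\<And>k. N \<le> k \<Longrightarrow> \<bar>g (s k) - L\<bar> < c"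
    using \<open>0 < c\<close> unfolding LIMSEQ_iff by (metis real_norm_def)
  have "c \<le> g (s (2 * N))" and "c \<le> - g (s (Suc (2 * N)))"
    using alternating[of "2 * N"] alternating[of "Suc (2 * N)"] by (simp_all add: power_mult)
  moreover have "\<bar>g (s (2 * N)) - L\<bar> < c" and "\<bar>g (s (Suc (2 * N))) - L\<bar> < c"
    by (simp_all add: N)
  ultimately show False by (simp add: abs_less_iff)
qed

lemma filterlim_dominance_time: "filterlim dominance_time at_top sequentially"
proof (rule filterlim_at_top_mono[OF filterlim_real_sequentially])
  have "real k \<le> 1 * (4 ^ (k + 2) + real k + 4)" for k
    by simp
  also have "\<dots> k \<le> dominance_time k" for k
    unfolding dominance_time_def by (rule mult_right_mono) simp_all
  finally show "\<forall>\<^sub>F k in sequentially. real k \<le> dominance_time k"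
    by simp
qed

theorem proposition1p3:
  shows "\<exists>a0 :: nat \<Rightarrow> complex. (\<forall>n. norm (a0 n) < 1) \<and>
           (\<exists>\<alpha>. schur_flow_solution a0 \<alpha>) \<and>
           (\<forall>\<alpha>. schur_flow_solution a0 \<alpha> \<longrightarrow>
                  \<not> (\<exists>L. ((\<lambda>t. \<alpha> 0 t) \<longlongrightarrow> L) at_top))"
proof (rule exI[of _ "\<lambda>n. verblunsky (example_moments 0) n"], intro conjI allI impI)
  let ?\<beta> = "\<lambda>n t. verblunsky (example_moments t) n"
  have flow: "schur_flow_solution (\<lambda>n. ?\<beta> n 0) ?\<beta>"
    by (rule moment_flow.schur_flow_solution_verblunsky[OF moment_flow_example_moments])
  then show "norm (?\<beta> n 0) < 1" for n
    by (rule schur_flow_solutionD)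
  from flow show "\<exists>\<alpha>. schur_flow_solution (\<lambda>n. ?\<beta> n 0) \<alpha>" by blast
  fix \<alpha> assume \<alpha>: "schur_flow_solution (\<lambda>n. ?\<beta> n 0) \<alpha>"
  have "1 / 2 \<le> (-1) ^ k * Im (\<alpha> 0 (dominance_time k))" for k
    using alternating_verblunsky_example[of k] schur_flow_solution_unique[OF \<alpha> flow, of "dominance_time k"]
    by (simp add: dominance_time_def)
  then have "\<not> ((\<lambda>t. Im (\<alpha> 0 t)) \<longlongrightarrow> Im L) at_top" for L
    by (intro not_tendsto_of_alternating_signs[OF filterlim_dominance_time, where c = "1 / 2"]) auto
  then show "\<not> (\<exists>L. ((\<lambda>t. \<alpha> 0 t) \<longlongrightarrow> L) at_top)"
    using tendsto_Im by blast
qed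

end
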